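(* Let $I$ be a general ring and $a\in I$. The following are equivalent: (1) $a$ is strongly $\pi$-regular in $I$; (2) there exists an idempotent $p=p^2\in\mathrm{comm}^2(a)$ such that $a-ap\in \mathrm{Nil}(I)$ and $a+p\in Q(I)$; (3) there exists an idempotent $p=p^2\in\mathrm{comm}(a)$ such that $a-ap\in\mathrm{Nil}(I)$ and $a+p\in Q(I)$; (4) there exists $b\in\mathrm{comm}^2(a)$ such that $ab^2=b$ and $a^2b-a\in\mathrm{Nil}(I)$; (5) there exists $b\in\mathrm{comm}(a)$ such that $ab^2=b$ and $a^2b-a\in\mathrm{Nil}(I)$.
   Context: A general ring is an associative ring not necessarily having an identity. $\mathrm{Nil}(I)$ is the set of nilpotent elements of $I$. For $p,q\in I$, $p*q=p+q-pq$; $Q(I)=\{q\in I\mid p*q=0=q*p \text{ for some } p\in I\}$; $\mathrm{comm}(a)=\{x\in I\mid xa=ax\}$, $\mathrm{comm}^2(a)=\{x\in I\mid xy=yx\text{ for all }y\in\mathrm{comm}(a)\}$. An element $a\in I$ is strongly $\pi$-regular if there exist $n\in\mathbb{N}$ and $x\in\mathrm{comm}(a)$ with $a^n=a^{n+1}x$. *)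

theory Defs
  imports Main
begin

text \<open>General (not necessarily unital) associative ring: type class ring.
  Positive powers: spow a n = a^(n+1).\<close>

fun spow :: "'a::semigroup_mult \<Rightarrow> nat \<Rightarrow> 'a" where
  "spow a 0 = a"
| "spow a (Suc n) = spow a n * a"

definition rpow :: "'a::semigroup_mult \<Rightarrow> nat \<Rightarrow> 'a" where
  "rpow a n = spow a (n - 1)"   \<comment> \<open>a^n for n \<ge> 1\<close>

definition Nil_set :: "'a::ring set" where
  "Nil_set = {x. \<exists>n\<ge>1. rpow x n = 0}"

definition circ :: "'a::ring \<Rightarrow> 'a \<Rightarrow> 'a" where
  "circ p q = p + q - p * q"

definition Qset :: "'a::ring set" where
  "Qset = {q. \<exists>p. circ p q = 0 \<and> circ q p = 0}"

definition comm :: "'a::ring \<Rightarrow> 'a set" where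
  "comm a = {x. x * a = a * x}"

definition comm2 :: "'a::ring \<Rightarrow> 'a set" where
  "comm2 a = {x. \<forall>y\<in>comm a. x * y = y * x}"

definition strongly_pi_regular :: "'a::ring \<Rightarrow> bool" where
  "strongly_pi_regular a \<longleftrightarrow>
     (\<exists>n\<ge>1. \<exists>x\<in>comm a. rpow a n = rpow a (n + 1) * x)"

end

theory Submission
  imports Defs
begin

text \<open>
  All five conditions are routed through the notion of a Drazin
  inverse: an element b commuting with a such that a b^2 = b and a^k = a^k (a b)
  for some k.  For such b the element p = a b is an idempotent, a - a p is
  nilpotent, and b lies in the double commutant of a.

  Then:
    (1) gives a Drazin inverse b = a^n x^(n+1);
    a Drazin inverse lies in comm2 a, and for b in comm a being a Drazin
    inverse is exactly condition (5), which yields (5) => (4) and (1) => (4);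
    (4) => (2) with p = a b and quasi-inverse b + p + r of a + p, where r is the
    quasi-inverse of the nilpotent a - a p;
    (3) => (1) with x = p q - p, q the quasi-inverse of a + p.
  The implications (2) => (3) and (4) => (5) hold because comm2 a \<subseteq> comm a.
\<close>

subsection \<open>Positive powers\<close>

lemma spow_commute:
  fixes x y :: "'a::semigroup_mult"
  assumes "x * y = y * x"
  shows "spow x k * y = y * spow x k"
proof (induction k)
  case 0 then show ?case using assms by simp
next
  case (Suc k)
  have "spow x (Suc k) * y = spow x k * (x * y)" by (simp add: mult.assoc)
  also have "\<dots> = (spow x k * y) * x" using assms by (simp add: mult.assoc)
  also have "\<dots> = y * spow x (Suc k)" using Suc by (simp add: mult.assoc)
  finally show ?case .
qed

lemma spow_Suc_left: "spow (x::'a::semigroup_mult) (Suc k) = x * spow x k"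
  using spow_commute[of x x k] by simp

lemma spow_mult:
  fixes x y :: "'a::semigroup_mult"
  assumes "x * y = y * x"
  shows "spow (x * y) k = spow x k * spow y k"
proof (induction k)
  case 0 then show ?case by simp
next
  case (Suc k)
  have c: "spow y k * x = x * spow y k" using spow_commute[of y x k] assms by simp
  have "spow (x * y) (Suc k) = spow x k * (spow y k * x) * y" using Suc by (simp add: mult.assoc)
  also have "\<dots> = spow x (Suc k) * spow y (Suc k)" using c by (simp add: mult.assoc)
  finally show ?case .
qed

lemma spow_idem:
  fixes p :: "'a::semigroup_mult"
  assumes "p * p = p"
  shows "spow p k = p"
  using assms by (induction k) auto

lemma absorbs_spow:
  fixes A u :: "'a::semigroup_mult"
  assumes "A * u = A"
  shows "A * spow u j = A"
  using assms by (induction j) (simp_all add: mult.assoc[symmetric])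

lemma spow_complement:
  fixes a p :: "'a::ring"
  assumes "p * p = p" "a * p = p * a"
  shows "spow (a - a * p) k = spow a k - spow a k * p"
proof (induction k)
  case 0 then show ?case by simp
next
  case (Suc k)
  let ?A = "spow a k"
  have "spow (a - a * p) (Suc k) = (?A - ?A * p) * (a - a * p)" using Suc by simp
  also have "\<dots> = ?A * a - ?A * (a * p) - ?A * (p * a) + ?A * (p * (a * p))"
    by (simp add: algebra_simps)
  also have "p * (a * p) = a * p" using assms by (metis mult.assoc)
  also have "p * a = a * p" using assms by simp
  finally show ?case by (simp add: mult.assoc)
qed

subsection \<open>Nilpotent and quasi-regular elements\<close>

lemma Nil_spow: "(x::'a::ring) \<in> Nil_set \<longleftrightarrow> (\<exists>k. spow x k = 0)"
proof
  assume "x \<in> Nil_set"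
  then show "\<exists>k. spow x k = 0" unfolding Nil_set_def rpow_def by blast
next
  assume "\<exists>k. spow x k = 0"
  then obtain k where "spow x k = 0" by blast
  then have "rpow x (Suc k) = 0" unfolding rpow_def by simp
  then show "x \<in> Nil_set" unfolding Nil_set_def by (intro CollectI exI[of _ "Suc k"]) simp
qed

lemma spow_uminus: "spow (- (x::'a::ring)) k = spow x k \<or> spow (- x) k = - spow x k"
  by (induction k) auto

lemma Nil_uminus: "- (x::'a::ring) \<in> Nil_set \<longleftrightarrow> x \<in> Nil_set"
proof -
  have "spow (- y) k = 0 \<longleftrightarrow> spow y k = 0" for y :: 'a and k
    using spow_uminus[of y k] by auto
  then show ?thesis unfolding Nil_spow by simp
qed

fun geom_sum :: "'a::ring \<Rightarrow> nat \<Rightarrow> 'a" where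
  "geom_sum n 0 = n"
| "geom_sum n (Suc k) = geom_sum n k + spow n (Suc k)"

lemma geom_sum_telescope: "(n::'a::ring) * geom_sum n k = geom_sum n (Suc k) - n"
proof (induction k)
  case 0 then show ?case by simp
next
  case (Suc k)
  have "n * geom_sum n (Suc k) = n * geom_sum n k + n * spow n (Suc k)"
    by (simp add: algebra_simps)
  also have "n * spow n (Suc k) = spow n (Suc (Suc k))" using spow_Suc_left[of n "Suc k"] by simp
  finally show ?case using Suc by simp
qed

lemma geom_sum_commute: "(n::'a::ring) * geom_sum n k = geom_sum n k * n"
proof (induction k)
  case 0 then show ?case by simp
next
  case (Suc k)
  have "n * spow n (Suc k) = spow n (Suc k) * n" using spow_commute[of n n "Suc k"] by simp
  then show ?case using Suc by (simp add: algebra_simps)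
qed

text \<open>Every nilpotent element n is quasi-regular: -(n + ... + n^(k+1)) is a
  two-sided quasi-inverse when n^(k+1) = 0.\<close>
lemma Nil_imp_Qset:
  fixes n :: "'a::ring"
  assumes "n \<in> Nil_set"
  shows "n \<in> Qset"
proof -
  obtain k where k: "spow n k = 0" using assms Nil_spow by blast
  define r where "r = - geom_sum n k"
  have "circ n r = n + r - n * r" unfolding circ_def ..
  also have "\<dots> = spow n (Suc k)"
    using geom_sum_telescope[of n k] by (simp add: r_def algebra_simps)
  finally have left: "circ n r = 0" using k by simp
  have "circ r n = circ n r"
    using geom_sum_commute[of n k] by (simp add: circ_def r_def algebra_simps)
  then show ?thesis unfolding Qset_def using left by auto
qed

lemma quasi_inverse_commute:
  fixes s q y :: "'a::ring"
  assumes "circ s q = 0" "circ q s = 0" "y * s = s * y"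
  shows "y * q = q * y"
proof -
  have q1: "q = s * q - s" using assms(1) unfolding circ_def by (simp add: algebra_simps)
  have q2: "q * s = s + q" using assms(2) unfolding circ_def by (simp add: algebra_simps)
  define z where "z = y * q"
  have z1: "z = s * z - s * y"
  proof -
    have "z = y * (s * q - s)" using q1 z_def by simp
    also have "\<dots> = (y * s) * q - y * s" by (simp add: algebra_simps)
    also have "\<dots> = s * z - s * y" using assms(3) z_def by (simp add: mult.assoc)
    finally show ?thesis .
  qed
  have "q * z = (q * s) * z - (q * s) * y"
    by (subst z1) (simp add: algebra_simps)
  also have "\<dots> = s * z + q * z - s * y - q * y" using q2 by (simp add: algebra_simps)
  finally have "s * z - s * y - q * y = 0" by (simp add: algebra_simps)
  then have "z - q * y = 0" using z1 by simp
  then show ?thesis using z_def by simp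
qed

lemma comm2_subset_comm: "comm2 (a::'a::ring) \<subseteq> comm a"
  unfolding comm2_def comm_def by auto

lemma self_in_comm2: "(a::'a::ring) \<in> comm2 a"
  unfolding comm2_def comm_def by auto

lemma comm2_mult:
  fixes a x y :: "'a::ring"
  assumes "x \<in> comm2 a" "y \<in> comm2 a"
  shows "x * y \<in> comm2 a"
  unfolding comm2_def
proof (intro CollectI ballI)
  fix z assume "z \<in> comm a"
  then have xz: "x * z = z * x" and yz: "y * z = z * y" using assms unfolding comm2_def by auto
  have "x * y * z = x * (z * y)" using yz by (simp add: mult.assoc)
  also have "\<dots> = z * (x * y)" using xz by (simp add: mult.assoc[symmetric])
  finally show "x * y * z = z * (x * y)" .
qed

subsection \<open>Drazin inverses\<close>

definition drazin_inverse :: "'a::ring \<Rightarrow> 'a \<Rightarrow> bool" where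
  "drazin_inverse a b \<longleftrightarrow>
     a * b = b * a \<and> a * (b * b) = b \<and> (\<exists>k. spow a k = spow a k * (a * b))"

lemma commuting_inner_inverse:
  fixes a b :: "'a::ring"
  assumes ab: "a * b = b * a" and abb: "a * (b * b) = b"
  shows "(a * b) * (a * b) = a * b" and "a * (a * b) = (a * b) * a"
    and "(a * b) * b = b" and "b * (a * b) = b"
proof -
  show pb: "(a * b) * b = b" using abb by (simp add: mult.assoc)
  have "b * (a * b) = (b * a) * b" by (simp add: mult.assoc)
  then show bp: "b * (a * b) = b" using ab pb by simp
  have "(a * b) * (a * b) = a * (b * (a * b))" by (simp add: mult.assoc)
  then show "(a * b) * (a * b) = a * b" using bp by simp
  have "a * (a * b) = a * (b * a)" using ab by simp
  then show "a * (a * b) = (a * b) * a" by (simp add: mult.assoc)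
qed

text \<open>For b commuting with a and a b^2 = b, the idempotent p = a b satisfies
  a^k = a^k p for some k exactly when a - a p = -(a^2 b - a) is nilpotent.\<close>
lemma drazin_inverse_iff:
  fixes a b :: "'a::ring"
  assumes b_comm: "b \<in> comm a"
  shows "drazin_inverse a b \<longleftrightarrow> a * (b * b) = b \<and> a * a * b - a \<in> Nil_set"
proof (cases "a * (b * b) = b")
  case abb: True
  let ?p = "a * b"
  have ab: "a * b = b * a" using b_comm unfolding comm_def by simp
  note p = commuting_inner_inverse[OF ab abb]
  have "a * a * b - a = - (a - a * ?p)" by (simp add: mult.assoc)
  then have "a * a * b - a \<in> Nil_set \<longleftrightarrow> (\<exists>k. spow (a - a * ?p) k = 0)"
    using Nil_uminus Nil_spow by metis
  also have "\<dots> \<longleftrightarrow> (\<exists>k. spow a k = spow a k * ?p)"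
    using spow_complement[OF p(1,2)] by simp
  finally show ?thesis unfolding drazin_inverse_def using ab abb by simp
qed (simp add: drazin_inverse_def)

text \<open>With p = a b and the
  power A = spow a k one has p = A b^k = b^k A and A p = A = p A; for y commuting with a (hence
  with A) this gives y p = p y p = p y, and then b y = b p y = ... = y b.\<close>
lemma drazin_inverse_comm2:
  fixes a b :: "'a::ring"
  assumes "drazin_inverse a b"
  shows "b \<in> comm2 a"
proof -
  obtain k where ab: "a * b = b * a" and abb: "a * (b * b) = b"
    and k: "spow a k = spow a k * (a * b)"
    using assms unfolding drazin_inverse_def by blast
  define p where "p = a * b"
  define A where "A = spow a k"
  define B where "B = spow b k"
  have pp: "p * p = p" and ap: "a * p = p * a" and pb: "p * b = b" and bp: "b * p = b"
    unfolding p_def using commuting_inner_inverse[OF ab abb] by simp_all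
  have pAB: "p = A * B"
    using spow_mult[OF ab, of k] spow_idem[OF pp, of k] A_def B_def p_def by simp
  have pBA: "p = B * A"
    using spow_mult[of b a k] ab spow_idem[OF pp, of k] A_def B_def p_def by simp
  have Ap: "A = A * p" using k A_def p_def by simp
  have pA: "p * A = A" using Ap spow_commute[of a p k] ap A_def by simp
  show ?thesis unfolding comm2_def
  proof (intro CollectI ballI)
    fix y assume "y \<in> comm a"
    then have ya: "y * a = a * y" unfolding comm_def by simp
    have yA: "y * A = A * y" using spow_commute[of a y k] ya A_def by simp
    have "y * p = A * (y * B)" using pAB yA by (metis mult.assoc)
    also have "\<dots> = p * (A * (y * B))" using pA by (metis mult.assoc)
    also have "\<dots> = p * y * p" using pAB yA by (metis mult.assoc)
    finally have yp: "y * p = p * y * p" .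
    have "p * y = B * (y * A)" using pBA yA by (simp add: mult.assoc)
    also have "\<dots> = B * (y * A) * p" using Ap by (simp add: mult.assoc)
    also have "\<dots> = p * y * p" using pBA yA by (simp add: mult.assoc)
    finally have py: "p * y = y * p" using yp by simp
    have "b * y = b * p * y" using bp by simp
    also have "\<dots> = b * y * (a * b)" using py p_def by (simp add: mult.assoc)
    also have "\<dots> = b * a * y * b" using ya by (metis mult.assoc)
    also have "\<dots> = p * y * b" using ab p_def by simp
    also have "\<dots> = y * b" using py pb by (simp add: mult.assoc)
    finally show "b * y = y * b" .
  qed
qed

text \<open>A strongly pi-regular element has a Drazin inverse: from a^(k+1) = a^(k+2) x
  with x in comm a, take b = a^(k+1) x^(k+2); then a b = (a x)^(k+2).\<close>
lemma strongly_pi_regular_drazin_inverse: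
  fixes a :: "'a::ring"
  assumes "strongly_pi_regular a"
  shows "\<exists>b. drazin_inverse a b"
proof -
  obtain n x where n: "n \<ge> 1" and x: "x \<in> comm a" and e: "rpow a n = rpow a (n + 1) * x"
    using assms unfolding strongly_pi_regular_def by blast
  obtain k where nk: "n = Suc k" using n by (cases n) auto
  define A where "A = spow a k"
  define u where "u = a * x"
  define b where "b = A * spow x (Suc k)"
  have xa: "x * a = a * x" using x unfolding comm_def by simp
  have ua: "u * a = a * u" unfolding u_def using xa by (simp add: mult.assoc)
  have Au: "A * spow u j = A" for j
    by (rule absorbs_spow) (use e nk in \<open>simp add: A_def u_def rpow_def mult.assoc\<close>)
  have uA: "spow u j * A = A * spow u j" for j
    using spow_commute[of u A j] spow_commute[of a u k] ua A_def by simp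
  have ab_eq: "a * b = spow u (Suc k)"
  proof -
    have "a * b = (a * A) * spow x (Suc k)" using b_def by (simp add: mult.assoc)
    also have "\<dots> = spow a (Suc k) * spow x (Suc k)" by (metis A_def spow_Suc_left)
    also have "\<dots> = spow u (Suc k)" using spow_mult[of a x "Suc k"] xa u_def by simp
    finally show ?thesis .
  qed
  have ab: "a * b = b * a"
  proof -
    have "spow x (Suc k) * a = a * spow x (Suc k)" using spow_commute[of x a "Suc k"] xa by simp
    moreover have "A * a = a * A" unfolding A_def by (rule spow_commute) simp
    ultimately show ?thesis using b_def by (metis mult.assoc)
  qed
  have "a * (b * b) = (a * b) * b" by (simp add: mult.assoc)
  also have "\<dots> = spow u (Suc k) * b" by (simp only: ab_eq)
  also have "\<dots> = b" unfolding b_def by (simp only: mult.assoc[symmetric] uA Au)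
  finally have abb: "a * (b * b) = b" .
  have "spow a k = spow a k * (a * b)" using Au ab_eq A_def by metis
  then show ?thesis unfolding drazin_inverse_def using ab abb by blast
qed

subsection \<open>The spectral idempotent\<close>

text \<open>(4) => (2): for b in comm2 a with a b^2 = b and a^2 b - a nilpotent, the
  idempotent p = a b lies in comm2 a, and a + p is quasi-regular with
  quasi-inverse b + p + r, where r is the quasi-inverse of n = a - a p.\<close>
lemma spectral_idempotent:
  fixes a b :: "'a::ring"
  assumes b2: "b \<in> comm2 a" and abb: "a * (b * b) = b" and nil: "a * a * b - a \<in> Nil_set"
  shows "\<exists>p. p = p * p \<and> p \<in> comm2 a \<and> a - a * p \<in> Nil_set \<and> a + p \<in> Qset"
proof -
  have "b \<in> comm a" using b2 comm2_subset_comm by blast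
  then have ab: "a * b = b * a" unfolding comm_def by simp
  define p where "p = a * b"
  define n where "n = a - a * p"
  define s where "s = a + p"
  have pp: "p * p = p" and ap: "a * p = p * a" and pb: "p * b = b" and bp: "b * p = b"
    unfolding p_def using commuting_inner_inverse[OF ab abb] by simp_all
  have pc2: "p \<in> comm2 a" unfolding p_def by (rule comm2_mult[OF self_in_comm2 b2])
  have nN: "n \<in> Nil_set"
    using nil Nil_uminus[of "a * a * b - a"] by (simp add: n_def p_def mult.assoc)
  obtain r where nr: "circ n r = 0" and rn: "circ r n = 0"
    using Nil_imp_Qset[OF nN] unfolding Qset_def by blast
  have pn: "p * n = 0" using ap pp by (simp add: n_def right_diff_distrib mult.assoc[symmetric])
  have np: "n * p = 0" using pp by (simp add: n_def left_diff_distrib mult.assoc)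
  have "a * (a * p) = a * (p * a)" by (simp add: ap)
  then have apa: "a * (a * p) = (a * p) * a" by (simp add: mult.assoc)
  have an: "a * n = n * a" using apa by (simp add: n_def algebra_simps)
  have sn: "s * n = n * s" using an pn np by (simp add: s_def algebra_simps)
  have rs: "r * s = s * r" using quasi_inverse_commute[OF nr rn sn] by simp
  have pr: "p * r = 0"
  proof -
    have "r = n * r - n" using nr unfolding circ_def by (simp add: algebra_simps)
    then have "p * r = p * (n * r - n)" by (rule arg_cong)
    also have "\<dots> = (p * n) * r - p * n" by (simp add: right_diff_distrib mult.assoc)
    finally show ?thesis using pn by simp
  qed
  have ar: "a * r = n * r" using pr by (simp add: n_def algebra_simps mult.assoc)
  define q where "q = b + p + r"
  have "s * q = a * b + a * p + a * r + (p * b + p * p + p * r)"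
    by (simp add: s_def q_def algebra_simps)
  also have "\<dots> = p + a * p + n * r + (b + p)" using pb pp pr ar p_def[symmetric] by simp
  finally have sq: "s * q = p + a * p + n * r + (b + p)" .
  have c1: "circ s q = 0"
  proof -
    have "circ s q = n + r - n * r"
      unfolding circ_def sq by (simp add: s_def q_def n_def algebra_simps)
    then show ?thesis using nr unfolding circ_def by simp
  qed
  have bs: "b * s = s * b" using ab bp pb by (simp add: s_def algebra_simps)
  have ps: "p * s = s * p" using ap by (simp add: s_def algebra_simps)
  have "q * s = s * q" using bs ps rs by (simp add: q_def algebra_simps)
  then have "circ q s = 0" using c1 unfolding circ_def by (simp add: algebra_simps)
  then have "a + p \<in> Qset" unfolding Qset_def using c1 s_def by blast
  then show ?thesis using pc2 pp nN unfolding n_def by (intro exI[of _ p]) simp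
qed

text \<open>(3) => (1): with q the quasi-inverse of a + p, the element x = p q - p
  commutes with a and satisfies a x = p, while a^m = a^m p for large m.\<close>
lemma idempotent_imp_strongly_pi_regular:
  fixes a p :: "'a::ring"
  assumes pp: "p = p * p" and pc: "p \<in> comm a" and nil: "a - a * p \<in> Nil_set"
    and Q: "a + p \<in> Qset"
  shows "strongly_pi_regular a"
proof -
  have ap: "a * p = p * a" using pc unfolding comm_def by simp
  obtain q where c1: "circ (a + p) q = 0" and c2: "circ q (a + p) = 0"
    using Q unfolding Qset_def by blast
  have aq: "a * q = q * a"
    by (rule quasi_inverse_commute[OF c1 c2]) (simp add: algebra_simps ap)
  define x where "x = p * q - p"
  have ppq: "p * (p * q) = p * q" by (simp add: mult.assoc[symmetric] pp[symmetric])
  have "p * circ (a + p) q = 0" using c1 by simp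
  then have e: "p * (a * q) = p * a + p"
    using pp ppq by (simp add: circ_def algebra_simps)
  have apq: "(a * p) * q = p * (a * q)" using ap by (metis mult.assoc)
  have "a * x = (a * p) * q - a * p" by (simp add: x_def right_diff_distrib mult.assoc)
  also have "\<dots> = p * (a * q) - p * a" by (subst apq) (simp add: ap)
  finally have ax: "a * x = p" using e by simp
  have "x * a = p * (q * a) - p * a" by (simp add: x_def left_diff_distrib mult.assoc)
  also have "\<dots> = p" using aq e by simp
  finally have xa: "x * a = a * x" using ax by simp
  obtain m where "spow (a - a * p) m = 0" using nil Nil_spow by blast
  then have am: "spow a m = spow a m * p" using spow_complement[OF pp[symmetric] ap, of m] by simp
  have "spow a m = spow a (Suc m) * x" using am ax by (simp add: mult.assoc)
  then have "rpow a (Suc m) = rpow a (Suc m + 1) * x" unfolding rpow_def by simp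
  moreover have "x \<in> comm a" using xa unfolding comm_def by simp
  ultimately show ?thesis unfolding strongly_pi_regular_def
    by (intro exI[of _ "Suc m"]) auto
qed

theorem theorem2p10:
  fixes a :: "'a::ring"
  shows "(strongly_pi_regular a
      \<longleftrightarrow> (\<exists>p. p = p * p \<and> p \<in> comm2 a \<and> a - a * p \<in> Nil_set \<and> a + p \<in> Qset))
    \<and> ((\<exists>p. p = p * p \<and> p \<in> comm2 a \<and> a - a * p \<in> Nil_set \<and> a + p \<in> Qset)
      \<longleftrightarrow> (\<exists>p. p = p * p \<and> p \<in> comm a \<and> a - a * p \<in> Nil_set \<and> a + p \<in> Qset))
    \<and> ((\<exists>p. p = p * p \<and> p \<in> comm a \<and> a - a * p \<in> Nil_set \<and> a + p \<in> Qset)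
      \<longleftrightarrow> (\<exists>b\<in>comm2 a. a * (b * b) = b \<and> a * a * b - a \<in> Nil_set))
    \<and> ((\<exists>b\<in>comm2 a. a * (b * b) = b \<and> a * a * b - a \<in> Nil_set)
      \<longleftrightarrow> (\<exists>b\<in>comm a. a * (b * b) = b \<and> a * a * b - a \<in> Nil_set))"
    (is "(?C1 \<longleftrightarrow> ?C2) \<and> (?C2 \<longleftrightarrow> ?C3) \<and> (?C3 \<longleftrightarrow> ?C4) \<and> (?C4 \<longleftrightarrow> ?C5)")
proof -
  have sub: "comm2 a \<subseteq> comm a" by (rule comm2_subset_comm)
  have one_four: "?C1 \<Longrightarrow> ?C4"
  proof -
    assume ?C1
    then obtain b where "drazin_inverse a b" using strongly_pi_regular_drazin_inverse by blast
    moreover from this have "b \<in> comm2 a" by (rule drazin_inverse_comm2)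
    ultimately show ?C4 using drazin_inverse_iff sub by blast
  qed
  have four_two: "?C4 \<Longrightarrow> ?C2" using spectral_idempotent by blast
  have two_three: "?C2 \<Longrightarrow> ?C3" using sub by blast
  have three_one: "?C3 \<Longrightarrow> ?C1" using idempotent_imp_strongly_pi_regular by blast
  have four_five: "?C4 \<Longrightarrow> ?C5" using sub by blast
  have five_four: "?C5 \<Longrightarrow> ?C4" using drazin_inverse_iff drazin_inverse_comm2 by blast
  show ?thesis using one_four four_two two_three three_one four_five five_four by argo
qed

end
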